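(* Let $r\ge2$ and $p\ge2$ be integers, $\mathcal{A}$ the adjacency tensor of an $r$-uniform (possibly weighted) hypergraph on $n$ vertices, and $f(\mathbf{x})=(r-1)!\,\mathcal{A}\mathbf{x}^r/\|\mathbf{x}\|_p^r$. Let $\mathbf{x}_k$ be an iterate of the CSRH iteration (described in the context) with $\nabla f(\mathbf{x}_k)\neq0$, and let $\mathbf{p}_k$ be the corresponding search direction. If $0<c_1<c_2<1$, then there exists $\alpha_k>0$ such that $$f(\mathbf{x}_{k+1}(\alpha_k))\ge f(\mathbf{x}_k)+c_1\alpha_k\nabla f(\mathbf{x}_k)^\top\mathbf{p}_k,\qquad \nabla f(\mathbf{x}_{k+1}(\alpha_k))^\top\mathbf{p}_k\le c_2\nabla f(\mathbf{x}_k)^\top\mathbf{p}_k,$$ where $$\mathbf{x}_{k+1}(\alpha)=\frac{[(2-\alpha\mathbf{x}_k^\top\mathbf{p}_k)^2-\|\alpha\mathbf{p}_k\|^2]\mathbf{x}_k+4\alpha\mathbf{p}_k}{4+\|\alpha\mathbf{p}_k\|^2-(\alpha\mathbf{x}_k^\top\mathbf{p}_k)^2}.$$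
   Context: Adjacency tensor: for a weighted $r$-uniform hypergraph with vertex set $\{1,\dots,n\}$ and edge weights $s(e)>0$, $\mathcal{A}=(a_{i_1\cdots i_r})$ is symmetric with $a_{i_1\cdots i_r}=s(e)/(r-1)!$ if $\{i_1,\dots,i_r\}=e$ is an edge and $0$ otherwise; $\mathcal{A}\mathbf{x}^r=\sum a_{i_1\cdots i_r}x_{i_1}\cdots x_{i_r}$, $(\mathcal{A}\mathbf{x}^{r-1})_i=\sum a_{ii_2\cdots i_r}x_{i_2}\cdots x_{i_r}$, $\|\mathbf{x}\|_p=(\sum|x_i|^p)^{1/p}$, $\|\cdot\|$ Euclidean. $\nabla f(\mathbf{x})=\frac{r!}{\|\mathbf{x}\|_p^r}(\mathcal{A}\mathbf{x}^{r-1}-\mathcal{A}\mathbf{x}^r\|\mathbf{x}\|_p^{-p}\mathbf{x}^{\langle p-1\rangle})$ with $(\mathbf{x}^{\langle p-1\rangle})_i=|x_i|^{p-1}\mathrm{sgn}(x_i)$. CSRH iteration: fix $0<c_1<c_2<1$, $\tfrac14<\tau<1$, $\epsilon>0$, a unit vector $\mathbf{x}_0$, and $\mathbf{p}_0=\nabla f(\mathbf{x}_0)$. At step $k$, choose $\alpha_k>0$ satisfying the two (Wolfe) inequalities $f(\mathbf{x}_{k+1}(\alpha_k))\ge f(\mathbf{x}_k)+c_1\alpha_k\nabla f(\mathbf{x}_k)^\top\mathbf{p}_k$ and $\nabla f(\mathbf{x}_{k+1}(\alpha_k))^\top\mathbf{p}_k\le c_2\nabla f(\mathbf{x}_k)^\top\mathbf{p}_k$,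 with $\mathbf{x}_{k+1}(\alpha)$ given by the displayed formula; set $\mathbf{x}_{k+1}=\mathbf{x}_{k+1}(\alpha_k)$, $\mathbf{d}_k=\mathbf{x}_{k+1}-\mathbf{x}_k$, $\mathbf{y}_k=\nabla f(\mathbf{x}_{k+1})-\nabla f(\mathbf{x}_k)$, $\beta_k=\max(0,\tilde\beta_k)$ where $\tilde\beta_k=(\tau\mathbf{d}_k\|\mathbf{y}_k\|^2/(\mathbf{d}_k^\top\mathbf{y}_k)-\mathbf{y}_k)^\top\nabla f(\mathbf{x}_{k+1})/(\mathbf{d}_k^\top\mathbf{y}_k)$ if $|\mathbf{d}_k^\top\mathbf{y}_k|\ge\epsilon\|\mathbf{d}_k\|\|\mathbf{y}_k\|$ and $\tilde\beta_k=0$ otherwise, and $\mathbf{p}_{k+1}=\nabla f(\mathbf{x}_{k+1})+\beta_k\mathbf{d}_k$. All iterates are unit vectors. *)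

theory Defs
  imports "HOL-Analysis.Analysis"
begin

text \<open>Vertices of the hypergraph are the elements of a finite type 'n (playing the role of
  {1..n}); vectors in R^n are elements of real^'n.\<close>

definition uniform_weighted_hypergraph :: "nat \<Rightarrow> 'n::finite set set \<Rightarrow> ('n set \<Rightarrow> real) \<Rightarrow> bool" where
  "uniform_weighted_hypergraph r E s \<longleftrightarrow> (\<forall>e\<in>E. card e = r \<and> s e > 0)"

definition adj_tensor :: "nat \<Rightarrow> 'n::finite set set \<Rightarrow> ('n set \<Rightarrow> real) \<Rightarrow> 'n list \<Rightarrow> real" where
  "adj_tensor r E s is = (if length is = r \<and> set is \<in> E then s (set is) / fact (r - 1) else 0)"

definition tensor_form :: "('n::finite list \<Rightarrow> real) \<Rightarrow> nat \<Rightarrow> real^'n \<Rightarrow> real" where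
  "tensor_form a r x = (\<Sum>is\<in>{is. length is = r}. a is * (\<Prod>j<r. x $ (is ! j)))"

definition tensor_vec :: "('n::finite list \<Rightarrow> real) \<Rightarrow> nat \<Rightarrow> real^'n \<Rightarrow> real^'n" where
  "tensor_vec a r x = (\<chi> i. \<Sum>js\<in>{js. length js = r - 1}. a (i # js) * (\<Prod>j<r - 1. x $ (js ! j)))"

definition pnorm :: "nat \<Rightarrow> real^'n::finite \<Rightarrow> real" where
  "pnorm p x = (\<Sum>i\<in>UNIV. \<bar>x $ i\<bar> ^ p) powr (1 / real p)"

definition sgnpow :: "nat \<Rightarrow> real^'n::finite \<Rightarrow> real^'n" where
  "sgnpow p x = (\<chi> i. \<bar>x $ i\<bar> ^ (p - 1) * sgn (x $ i))"

definition fobj :: "nat \<Rightarrow> nat \<Rightarrow> 'n::finite set set \<Rightarrow> ('n set \<Rightarrow> real) \<Rightarrow> real^'n \<Rightarrow> real" where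
  "fobj r p E s x = fact (r - 1) * tensor_form (adj_tensor r E s) r x / pnorm p x ^ r"

definition gradf :: "nat \<Rightarrow> nat \<Rightarrow> 'n::finite set set \<Rightarrow> ('n set \<Rightarrow> real) \<Rightarrow> real^'n \<Rightarrow> real^'n" where
  "gradf r p E s x = (fact r / pnorm p x ^ r) *\<^sub>R
     (tensor_vec (adj_tensor r E s) r x
      - (tensor_form (adj_tensor r E s) r x * pnorm p x powr (- real p)) *\<^sub>R sgnpow p x)"

definition xnext :: "real^'n::finite \<Rightarrow> real^'n \<Rightarrow> real \<Rightarrow> real^'n" where
  "xnext x d \<alpha> = (1 / (4 + norm (\<alpha> *\<^sub>R d) ^ 2 - (\<alpha> * (x \<bullet> d)) ^ 2)) *\<^sub>R
     (((2 - \<alpha> * (x \<bullet> d)) ^ 2 - norm (\<alpha> *\<^sub>R d) ^ 2) *\<^sub>R x + (4 * \<alpha>) *\<^sub>R d)"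

definition wolfe :: "(real^'n::finite \<Rightarrow> real) \<Rightarrow> (real^'n \<Rightarrow> real^'n) \<Rightarrow> real \<Rightarrow> real
    \<Rightarrow> real^'n \<Rightarrow> real^'n \<Rightarrow> real \<Rightarrow> bool" where
  "wolfe f g c1 c2 x d \<alpha> \<longleftrightarrow>
     f (xnext x d \<alpha>) \<ge> f x + c1 * \<alpha> * (g x \<bullet> d) \<and>
     g (xnext x d \<alpha>) \<bullet> d \<le> c2 * (g x \<bullet> d)"

definition csrh_beta :: "real \<Rightarrow> real \<Rightarrow> real^'n::finite \<Rightarrow> real^'n \<Rightarrow> real^'n \<Rightarrow> real" where
  "csrh_beta \<tau> \<epsilon> d y g1 =
     max 0 (if \<bar>d \<bullet> y\<bar> \<ge> \<epsilon> * norm d * norm y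
            then ((\<tau> * norm y ^ 2 / (d \<bullet> y)) *\<^sub>R d - y) \<bullet> g1 / (d \<bullet> y)
            else 0)"

text \<open>x, p, alpha are the first k+1 iterates / directions and first k step sizes of a CSRH run.\<close>
definition csrh_run :: "(real^'n::finite \<Rightarrow> real) \<Rightarrow> (real^'n \<Rightarrow> real^'n) \<Rightarrow> real \<Rightarrow> real \<Rightarrow> real \<Rightarrow> real
    \<Rightarrow> (nat \<Rightarrow> real^'n) \<Rightarrow> (nat \<Rightarrow> real^'n) \<Rightarrow> (nat \<Rightarrow> real) \<Rightarrow> nat \<Rightarrow> bool" where
  "csrh_run f g c1 c2 \<tau> \<epsilon> x p \<alpha> k \<longleftrightarrow>
     0 < c1 \<and> c1 < c2 \<and> c2 < 1 \<and> 1/4 < \<tau> \<and> \<tau> < 1 \<and> 0 < \<epsilon> \<and>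
     norm (x 0) = 1 \<and> p 0 = g (x 0) \<and>
     (\<forall>j<k. 0 < \<alpha> j \<and> wolfe f g c1 c2 (x j) (p j) (\<alpha> j) \<and>
        x (Suc j) = xnext (x j) (p j) (\<alpha> j) \<and>
        p (Suc j) = g (x (Suc j)) +
          csrh_beta \<tau> \<epsilon> (x (Suc j) - x j) (g (x (Suc j)) - g (x j)) (g (x (Suc j))) *\<^sub>R (x (Suc j) - x j))"

end

theory Submission
  imports Defs
begin

text \<open>The curve a \<mapsto> xnext x d a stays on the unit sphere and starts at x with velocity
  d - (x \<bullet> d) x. Since f is homogeneous of degree 0, its gradient is tangent to the sphere, so the
  slope of a \<mapsto> f (xnext x d a) at 0 is \<nabla>f(x) \<bullet> d, which is positive because CSRH directions are
  ascent directions (\<beta> \<ge> 0, and \<tau> > 1/4 makes the \<beta>-term harmless). As f is bounded on the sphere,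
  \<psi>(a) = f (xnext x d a) - f x - c1 a \<nabla>f(x) \<bullet> d is positive right of 0 and negative far out, hence
  has an interior maximum a > 0: there the Armijo inequality holds and the slope equals
  c1 \<nabla>f(x) \<bullet> d. Tangency of the gradient turns \<nabla>f(xnext x d a) \<bullet> d into N/4 times that slope,
  where N \<le> 4 is the numerator of the update, which gives the curvature condition.\<close>

section \<open>Symmetric tensor forms\<close>

lemma sum_lists_length_Suc:
  "(\<Sum>is\<in>{is. length is = Suc m}. F is) = (\<Sum>i\<in>UNIV. \<Sum>js\<in>{js. length js = m}. F (i # js))"
proof -
  have "(\<Sum>is\<in>{is. length is = Suc m}. F is) = (\<Sum>(i, js)\<in>UNIV \<times> {js. length js = m}. F (i # js))"
    by (rule sum.reindex_bij_witness[of _ "\<lambda>(i, js). i # js" "\<lambda>is. (hd is, tl is)"])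
       (auto simp: length_Suc_conv)
  then show ?thesis
    by (simp add: sum.cartesian_product)
qed

lemma tensor_vec_inner_self: "tensor_vec a (Suc m) x \<bullet> x = tensor_form a (Suc m) x"
proof -
  have "(\<Prod>j<Suc m. x $ ((i # js) ! j)) = x $ i * (\<Prod>j<m. x $ (js ! j))" for i js
    by (simp only: prod.lessThan_Suc_shift) simp
  then show ?thesis
    unfolding tensor_form_def sum_lists_length_Suc
    by (simp add: inner_vec_def tensor_vec_def sum_distrib_left mult_ac)
qed

lemma tensor_vec_inner:
  "tensor_vec a (Suc m) x \<bullet> h
     = (\<Sum>is\<in>{is. length is = Suc m}. a is * (h $ (is ! 0) * (\<Prod>l\<in>{..<Suc m} - {0}. x $ (is ! l))))"
proof -
  have "{..<Suc m} - {0} = Suc ` {..<m}"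
    unfolding lessThan_Suc_eq_insert_0 by auto
  then have "(\<Prod>l\<in>{..<Suc m} - {0}. x $ ((i # js) ! l)) = (\<Prod>l<m. x $ (js ! l))" for i js
    by (simp add: prod.reindex)
  then show ?thesis
    unfolding sum_lists_length_Suc
    by (simp add: inner_vec_def tensor_vec_def sum_distrib_left sum_distrib_right mult_ac)
qed

lemma symmetric_tensor_sum_slot_swap:
  assumes sym: "\<And>xs ys. mset xs = mset ys \<Longrightarrow> a xs = a ys" and j: "j < Suc m"
  shows "(\<Sum>is\<in>{is. length is = Suc m}. a is * (h $ (is ! j) * (\<Prod>l\<in>{..<Suc m} - {j}. x $ (is ! l))))
       = (\<Sum>is\<in>{is. length is = Suc m}. a is * (h $ (is ! 0) * (\<Prod>l\<in>{..<Suc m} - {0}. x $ (is ! l))))"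
proof -
  let ?\<pi> = "Transposition.transpose 0 j"
  have \<pi>: "?\<pi> permutes {..<Suc m}"
    using j by (simp add: permutes_swap_id)
  have swap: "permute_list ?\<pi> (permute_list ?\<pi> is) = is" if "length is = Suc m" for "is" :: "'a list"
    using \<pi> that by (simp add: permute_list_compose[symmetric])
  have term_eq: "a (permute_list ?\<pi> is) * (h $ (permute_list ?\<pi> is ! 0)
        * (\<Prod>l\<in>{..<Suc m} - {0}. x $ (permute_list ?\<pi> is ! l)))
      = a is * (h $ (is ! j) * (\<Prod>l\<in>{..<Suc m} - {j}. x $ (is ! l)))"
    if L: "length is = Suc m" for "is"
  proof -
    have "(\<Prod>l\<in>{..<Suc m} - {0}. x $ (permute_list ?\<pi> is ! l)) = (\<Prod>l\<in>{..<Suc m} - {j}. x $ (is ! l))"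
    proof (rule prod.reindex_bij_witness[of _ ?\<pi> ?\<pi>])
      fix l assume l: "l \<in> {..<Suc m} - {0}"
      show "?\<pi> (?\<pi> l) = l" by simp
      show "?\<pi> l \<in> {..<Suc m} - {j}" using l j by (auto simp: Transposition.transpose_def)
      show "x $ (is ! ?\<pi> l) = x $ (permute_list ?\<pi> is ! l)" using l L \<pi> by (simp add: permute_list_nth)
    next
      fix l assume l: "l \<in> {..<Suc m} - {j}"
      show "?\<pi> (?\<pi> l) = l" by simp
      show "?\<pi> l \<in> {..<Suc m} - {0}" using l j by (auto simp: Transposition.transpose_def)
    qed
    moreover have "a (permute_list ?\<pi> is) = a is"
      by (rule sym) (use \<pi> L in simp)
    ultimately show ?thesis
      using \<pi> L by (simp add: permute_list_nth)
  qed
  show ?thesis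
    by (rule sum.reindex_bij_witness[of _ "permute_list ?\<pi>" "permute_list ?\<pi>"])
       (simp_all add: swap term_eq)
qed

lemma tensor_form_has_derivative:
  assumes sym: "\<And>xs ys. mset xs = mset ys \<Longrightarrow> a xs = a ys"
  shows "(tensor_form a (Suc m) has_derivative (\<lambda>h. real (Suc m) * (tensor_vec a (Suc m) x \<bullet> h))) (at x)"
proof -
  have "(tensor_form a (Suc m) has_derivative
      (\<lambda>h. \<Sum>is\<in>{is. length is = Suc m}. a is *
         (\<Sum>j<Suc m. h $ (is ! j) * (\<Prod>l\<in>{..<Suc m} - {j}. x $ (is ! l))))) (at x)"
    unfolding tensor_form_def
    by (intro has_derivative_sum has_derivative_mult_right has_derivative_prod
        bounded_linear_imp_has_derivative bounded_linear_vec_nth)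
  moreover have "(\<Sum>is\<in>{is. length is = Suc m}. a is *
         (\<Sum>j<Suc m. h $ (is ! j) * (\<Prod>l\<in>{..<Suc m} - {j}. x $ (is ! l))))
      = real (Suc m) * (tensor_vec a (Suc m) x \<bullet> h)" for h
  proof -
    have "(\<Sum>is\<in>{is. length is = Suc m}. a is *
         (\<Sum>j<Suc m. h $ (is ! j) * (\<Prod>l\<in>{..<Suc m} - {j}. x $ (is ! l))))
      = (\<Sum>j<Suc m. \<Sum>is\<in>{is. length is = Suc m}. a is * (h $ (is ! j) * (\<Prod>l\<in>{..<Suc m} - {j}. x $ (is ! l))))"
      by (simp only: sum_distrib_left) (rule sum.swap)
    also have "\<dots> = (\<Sum>j<Suc m. tensor_vec a (Suc m) x \<bullet> h)"
      by (rule sum.cong[OF refl], subst symmetric_tensor_sum_slot_swap[OF sym])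
         (simp_all add: tensor_vec_inner)
    finally show ?thesis
      by simp
  qed
  ultimately show ?thesis
    by simp
qed

section \<open>The objective on the unit sphere\<close>

definition abs_pow_sum :: "nat \<Rightarrow> real^'n::finite \<Rightarrow> real" where
  "abs_pow_sum p x = (\<Sum>i\<in>UNIV. \<bar>x $ i\<bar> ^ p)"

lemma abs_pow_sum_pos:
  assumes "x \<noteq> 0" "p \<ge> 1"
  shows "0 < abs_pow_sum p x"
proof -
  obtain i where "x $ i \<noteq> 0"
    using assms(1) by (metis vec_eq_iff zero_index)
  then have "0 < \<bar>x $ i\<bar> ^ p"
    by simp
  also have "\<dots> \<le> abs_pow_sum p x"
    unfolding abs_pow_sum_def by (rule member_le_sum) auto
  finally show ?thesis .
qed

lemma abs_power_has_real_derivative: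
  assumes p: "p \<ge> 2"
  shows "((\<lambda>u::real. \<bar>u\<bar> ^ p) has_real_derivative real p * (\<bar>u\<bar> ^ (p - 1) * sgn u)) (at u)"
proof (cases "u = 0")
  case True
  \<comment> \<open>Caratheodory's criterion with the continuous slope z \<bar>z\<bar>^(p-2), which vanishes at 0 since p \<ge> 2\<close>
  have "\<bar>z\<bar> ^ p = z * \<bar>z\<bar> ^ (p - 2) * z" for z :: real
  proof -
    obtain q where "p = q + 2"
      using le_Suc_ex[OF p] by (auto simp: add.commute)
    then show ?thesis
      by (simp add: power_add power2_eq_square mult_ac)
  qed
  then show ?thesis
    unfolding CARAT_DERIV using True p
    by (intro exI[of _ "\<lambda>z. z * \<bar>z\<bar> ^ (p - 2)"]) (auto intro!: continuous_intros)
next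
  case False
  have "(\<lambda>h. h \<bullet> sgn u) = (*) (sgn u)"
    by (simp add: fun_eq_iff)
  then have "(norm has_real_derivative sgn u) (at u)"
    using has_derivative_norm[OF False] by (simp only: has_field_derivative_def)
  moreover have "norm = (abs :: real \<Rightarrow> real)"
    by (simp add: fun_eq_iff)
  ultimately have "(abs has_real_derivative sgn u) (at u)"
    by simp
  from DERIV_chain2[OF DERIV_pow this] show ?thesis
    by (simp add: mult_ac)
qed

lemma abs_pow_sum_has_derivative:
  assumes "p \<ge> 2"
  shows "(abs_pow_sum p has_derivative (\<lambda>h. real p * (sgnpow p x \<bullet> h))) (at x)"
proof -
  have "((\<lambda>x. \<Sum>i\<in>UNIV. \<bar>x $ i\<bar> ^ p) has_derivative
      (\<lambda>h. \<Sum>i\<in>UNIV. real p * (\<bar>x $ i\<bar> ^ (p - 1) * sgn (x $ i)) * h $ i)) (at x)"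
    by (intro has_derivative_sum has_derivative_compose[OF
          bounded_linear_imp_has_derivative[OF bounded_linear_vec_nth]
          abs_power_has_real_derivative[OF assms, THEN has_field_derivative_imp_has_derivative]])
  then show ?thesis
    by (simp add: abs_pow_sum_def[abs_def] sgnpow_def inner_vec_def sum_distrib_left mult_ac)
qed

lemma sgnpow_inner_self:
  assumes "p \<ge> 1"
  shows "sgnpow p x \<bullet> x = abs_pow_sum p x"
proof -
  have "\<bar>u\<bar> ^ (p - 1) * sgn u * u = \<bar>u\<bar> ^ p" for u :: real
    using assms by (simp add: abs_sgn mult.assoc mult.commute[of "sgn u"] power_Suc2[symmetric])
  then show ?thesis
    by (simp add: sgnpow_def inner_vec_def abs_pow_sum_def)
qed

lemma pnorm_power:
  assumes "r \<ge> 1"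
  shows "pnorm p x ^ r = abs_pow_sum p x powr (real r / real p)"
  using assms by (cases "abs_pow_sum p x = 0")
    (simp_all add: pnorm_def abs_pow_sum_def powr_power)

lemma pnorm_powr_neg:
  assumes "p \<ge> 1" "0 < abs_pow_sum p x"
  shows "pnorm p x powr (- real p) = inverse (abs_pow_sum p x)"
  using assms by (simp add: pnorm_def abs_pow_sum_def powr_powr powr_minus)

lemma adj_tensor_symmetric: "mset xs = mset ys \<Longrightarrow> adj_tensor r E s xs = adj_tensor r E s ys"
  unfolding adj_tensor_def by (metis mset_eq_length set_mset_mset)

lemma gradf_inner_self:
  assumes "r = Suc m" "p \<ge> 1" "x \<noteq> 0"
  shows "gradf r p E s x \<bullet> x = 0"
  using assms abs_pow_sum_pos[OF assms(3,2)]
  by (simp add: gradf_def inner_diff_left sgnpow_inner_self pnorm_powr_neg tensor_vec_inner_self)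

lemma fobj_has_derivative:
  assumes r: "r = Suc m" and p: "p \<ge> 2" and x: "x \<noteq> 0"
  shows "(fobj r p E s has_derivative (\<lambda>h. gradf r p E s x \<bullet> h)) (at x)"
proof -
  let ?A = "adj_tensor r E s" and ?S = "abs_pow_sum p x"
  define e where "e = - (real r / real p)"
  have r1: "r \<ge> 1"
    using r by simp
  have S: "0 < ?S"
    using abs_pow_sum_pos[OF x] p by simp
  have fobj_eq: "fobj r p E s = (\<lambda>y. fact (r - 1) * (tensor_form ?A r y * abs_pow_sum p y powr e))"
    by (simp add: fun_eq_iff fobj_def pnorm_power[OF r1] powr_minus divide_inverse e_def)
  have power: "((\<lambda>z. z powr e) has_derivative (*) (e * ?S powr (e - 1))) (at ?S)"
    using has_real_derivative_powr[OF S, of e] by (simp only: has_field_derivative_def)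
  have "(fobj r p E s has_derivative (\<lambda>h. fact (r - 1) *
      (tensor_form ?A r x * (e * ?S powr (e - 1) * (real p * (sgnpow p x \<bullet> h)))
       + real r * (tensor_vec ?A r x \<bullet> h) * ?S powr e))) (at x)"
    unfolding fobj_eq
    by (intro has_derivative_mult_right has_derivative_mult
        has_derivative_compose[OF abs_pow_sum_has_derivative[OF p] power]
        tensor_form_has_derivative[of _ m, unfolded r[symmetric]] adj_tensor_symmetric)
  moreover have "fact (r - 1) * (tensor_form ?A r x * (e * ?S powr (e - 1) * (real p * (sgnpow p x \<bullet> h)))
       + real r * (tensor_vec ?A r x \<bullet> h) * ?S powr e) = gradf r p E s x \<bullet> h" for h
  proof -
    have "fact r / pnorm p x ^ r = real r * fact (r - 1) * ?S powr e"
      using r1 by (simp add: fact_reduce pnorm_power[OF r1] powr_minus divide_inverse e_def)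
    then have "gradf r p E s x \<bullet> h = real r * fact (r - 1) * ?S powr e
        * (tensor_vec ?A r x \<bullet> h - tensor_form ?A r x / ?S * (sgnpow p x \<bullet> h))"
      using p S by (simp add: gradf_def inner_diff_left pnorm_powr_neg divide_inverse)
    moreover have "?S powr (e - 1) = ?S powr e / ?S"
      using S by (simp add: powr_diff)
    moreover have "e * real p = - real r"
      using p by (simp add: e_def)
    ultimately show ?thesis
      by (simp add: algebra_simps) (simp add: mult.assoc[symmetric])
  qed
  ultimately show ?thesis
    by simp
qed

section \<open>The curvilinear update\<close>

definition xnext_num :: "real^'n::finite \<Rightarrow> real^'n \<Rightarrow> real \<Rightarrow> real" where
  "xnext_num x d a = (2 - a * (x \<bullet> d))\<^sup>2 - a\<^sup>2 * (d \<bullet> d)"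

definition xnext_den :: "real^'n::finite \<Rightarrow> real^'n \<Rightarrow> real \<Rightarrow> real" where
  "xnext_den x d a = 4 + a\<^sup>2 * (d \<bullet> d) - a\<^sup>2 * (x \<bullet> d)\<^sup>2"

definition xnext_num_deriv :: "real^'n::finite \<Rightarrow> real^'n \<Rightarrow> real \<Rightarrow> real" where
  "xnext_num_deriv x d a = - 2 * (x \<bullet> d) * (2 - a * (x \<bullet> d)) - 2 * a * (d \<bullet> d)"

definition xnext_den_deriv :: "real^'n::finite \<Rightarrow> real^'n \<Rightarrow> real \<Rightarrow> real" where
  "xnext_den_deriv x d a = 2 * a * (d \<bullet> d) - 2 * a * (x \<bullet> d)\<^sup>2"

definition xnext_velocity :: "real^'n::finite \<Rightarrow> real^'n \<Rightarrow> real \<Rightarrow> real^'n" where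
  "xnext_velocity x d a =
     ((xnext_num_deriv x d a * xnext_den x d a - xnext_num x d a * xnext_den_deriv x d a)
        / (xnext_den x d a)\<^sup>2) *\<^sub>R x
   + ((4 * xnext_den x d a - 4 * a * xnext_den_deriv x d a) / (xnext_den x d a)\<^sup>2) *\<^sub>R d"

lemma xnext_eq: "xnext x d a = (xnext_num x d a / xnext_den x d a) *\<^sub>R x + (4 * a / xnext_den x d a) *\<^sub>R d"
proof -
  have "(norm (a *\<^sub>R d))\<^sup>2 = a\<^sup>2 * (d \<bullet> d)" "(a * (x \<bullet> d))\<^sup>2 = a\<^sup>2 * (x \<bullet> d)\<^sup>2"
    by (simp_all add: power2_norm_eq_inner power_mult_distrib)
  then show ?thesis
    unfolding xnext_def xnext_den_def xnext_num_def
    by (simp add: scaleR_add_right divide_inverse mult.commute)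
qed

lemma xnext_0: "xnext x d 0 = x"
  by (simp add: xnext_def)

lemma inner_unit_square_le: "norm x = 1 \<Longrightarrow> (x \<bullet> d)\<^sup>2 \<le> d \<bullet> d"
  using Cauchy_Schwarz_ineq[of x d] by (simp add: norm_eq_1)

lemma xnext_den_ge:
  assumes "norm x = 1"
  shows "4 \<le> xnext_den x d a"
proof -
  have "0 \<le> a\<^sup>2 * (d \<bullet> d - (x \<bullet> d)\<^sup>2)"
    using inner_unit_square_le[OF assms, of d] by simp
  then show ?thesis
    unfolding xnext_den_def by (simp add: algebra_simps)
qed

lemma xnext_num_le:
  assumes "norm x = 1" "0 \<le> a" "0 \<le> x \<bullet> d"
  shows "xnext_num x d a \<le> 4"
proof -
  have "0 \<le> a\<^sup>2 * (d \<bullet> d - (x \<bullet> d)\<^sup>2)"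
    using inner_unit_square_le[OF assms(1), of d] by simp
  moreover have "0 \<le> a * (x \<bullet> d)"
    using assms by simp
  ultimately show ?thesis
    unfolding xnext_num_def by (simp add: algebra_simps power2_eq_square)
qed

lemma norm_xnext:
  assumes "norm x = 1"
  shows "norm (xnext x d a) = 1"
proof -
  let ?D = "xnext_den x d a" and ?N = "xnext_num x d a"
  have D: "?D \<noteq> 0"
    using xnext_den_ge[OF assms, of d a] by simp
  have "(norm (xnext x d a))\<^sup>2 = (?N\<^sup>2 + 2 * ?N * (4 * a) * (x \<bullet> d) + (4 * a)\<^sup>2 * (d \<bullet> d)) / ?D\<^sup>2"
    using assms D unfolding xnext_eq power2_norm_eq_inner
    by (simp add: inner_add_left inner_add_right norm_eq_1 inner_commute power2_eq_square field_simps)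
  also have "?N\<^sup>2 + 2 * ?N * (4 * a) * (x \<bullet> d) + (4 * a)\<^sup>2 * (d \<bullet> d) = ?D\<^sup>2"
    unfolding xnext_num_def xnext_den_def by (simp add: power2_eq_square algebra_simps)
  finally show ?thesis
    using D norm_ge_zero[of "xnext x d a"] by (simp add: power2_eq_1_iff)
qed

lemma xnext_has_vector_derivative:
  assumes "norm x = 1"
  shows "((\<lambda>a. xnext x d a) has_vector_derivative xnext_velocity x d a) (at a)"
proof -
  have D: "xnext_den x d a \<noteq> 0"
    using xnext_den_ge[OF assms, of d a] by simp
  have den: "((\<lambda>a. xnext_den x d a) has_real_derivative xnext_den_deriv x d a) (at a)"
    unfolding xnext_den_def xnext_den_deriv_def by (rule derivative_eq_intros refl | simp)+
  have num: "((\<lambda>a. xnext_num x d a) has_real_derivative xnext_num_deriv x d a) (at a)"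
    unfolding xnext_num_def xnext_num_deriv_def
    by (rule derivative_eq_intros refl | simp add: algebra_simps)+
  have lin: "((\<lambda>a. 4 * a) has_real_derivative 4) (at a)"
    by (rule derivative_eq_intros refl | simp)+
  show ?thesis
    unfolding xnext_eq xnext_velocity_def
    using has_vector_derivative_add[OF
        has_vector_derivative_scaleR[OF DERIV_divide[OF num den D] has_vector_derivative_const]
        has_vector_derivative_scaleR[OF DERIV_divide[OF lin den D] has_vector_derivative_const]]
    by (simp add: power2_eq_square)
qed

lemma xnext_velocity_0: "xnext_velocity x d 0 = d - (x \<bullet> d) *\<^sub>R x"
  by (simp add: xnext_velocity_def xnext_num_deriv_def xnext_num_def xnext_den_def
      xnext_den_deriv_def algebra_simps)

lemma direction_eq_xnext_velocity:
  assumes "norm x = 1"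
  shows "d = ((xnext_den_deriv x d a * xnext_num x d a - xnext_num_deriv x d a * xnext_den x d a)
              / (4 * xnext_den x d a)) *\<^sub>R xnext x d a
           + (xnext_num x d a / 4) *\<^sub>R xnext_velocity x d a"
proof -
  let ?D = "xnext_den x d a" and ?N = "xnext_num x d a"
    and ?D' = "xnext_den_deriv x d a" and ?N' = "xnext_num_deriv x d a"
  have D: "?D \<noteq> 0"
    using xnext_den_ge[OF assms, of d a] by simp
  let ?l = "(?D' * ?N - ?N' * ?D) / (4 * ?D)"
  have key: "?N - a * ?N' = ?D"
    unfolding xnext_num_def xnext_num_deriv_def xnext_den_def by (simp add: power2_eq_square algebra_simps)
  have coeff_x: "?l * (?N / ?D) + ?N / 4 * ((?N' * ?D - ?N * ?D') / ?D\<^sup>2) = 0"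
    using D by (simp add: field_simps power2_eq_square)
  have "?l * (4 * a / ?D) + ?N / 4 * ((4 * ?D - 4 * a * ?D') / ?D\<^sup>2) = ?D * (?N - a * ?N') / ?D\<^sup>2"
    using D by (simp add: field_simps power2_eq_square)
  then have coeff_d: "?l * (4 * a / ?D) + ?N / 4 * ((4 * ?D - 4 * a * ?D') / ?D\<^sup>2) = 1"
    using D unfolding key by (simp add: power2_eq_square)
  have "?l *\<^sub>R xnext x d a + (?N / 4) *\<^sub>R xnext_velocity x d a
      = (?l * (?N / ?D) + ?N / 4 * ((?N' * ?D - ?N * ?D') / ?D\<^sup>2)) *\<^sub>R x
        + (?l * (4 * a / ?D) + ?N / 4 * ((4 * ?D - 4 * a * ?D') / ?D\<^sup>2)) *\<^sub>R d"
    unfolding xnext_eq xnext_velocity_def by (simp add: scaleR_add_right scaleR_add_left)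
  then show ?thesis
    unfolding coeff_x coeff_d by simp
qed

section \<open>CSRH search directions\<close>

lemma csrh_run_norm:
  assumes run: "csrh_run f g c1 c2 \<tau> \<epsilon> x d \<alpha> k" and "j \<le> k"
  shows "norm (x j) = 1"
  using assms(2)
proof (induction j)
  case 0
  then show ?case
    using run by (simp add: csrh_run_def)
next
  case (Suc j)
  then have "x (Suc j) = xnext (x j) (d j) (\<alpha> j)"
    using run by (simp add: csrh_run_def)
  then show ?case
    using Suc by (simp add: norm_xnext)
qed

lemma quadratic_form_pos:
  fixes u v \<tau> :: real
  assumes "v \<noteq> 0" and "1/4 < \<tau>"
  shows "0 < v\<^sup>2 - u * v + \<tau> * u\<^sup>2"
proof -
  have "v\<^sup>2 - u * v + \<tau> * u\<^sup>2 = (v - u / 2)\<^sup>2 + (\<tau> - 1/4) * u\<^sup>2"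
    by (simp add: power2_eq_square algebra_simps)
  moreover have "0 < (v - u / 2)\<^sup>2 \<or> 0 < (\<tau> - 1/4) * u\<^sup>2"
    using assms by (cases "u = 0") auto
  ultimately show ?thesis
    using assms(2) by (auto intro: add_pos_nonneg add_nonneg_pos)
qed

lemma csrh_beta_ascent:
  fixes D Y g :: "real^'n::finite"
  assumes g: "g \<noteq> 0" and \<tau>: "1/4 < \<tau>"
  shows "0 < g \<bullet> g + csrh_beta \<tau> \<epsilon> D Y g * (D \<bullet> g)"
proof (cases "csrh_beta \<tau> \<epsilon> D Y g = 0")
  case True
  then show ?thesis
    using g by simp
next
  case False
  let ?q = "D \<bullet> Y"
  let ?z = "(D \<bullet> g) / ?q"
  have \<beta>: "csrh_beta \<tau> \<epsilon> D Y g = ((\<tau> * (norm Y)\<^sup>2 / ?q) *\<^sub>R D - Y) \<bullet> g / ?q"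
    using False by (auto simp: csrh_beta_def split: if_splits)
  then have "?q \<noteq> 0"
    using False by auto
  then have "csrh_beta \<tau> \<epsilon> D Y g * (D \<bullet> g) = \<tau> * (norm Y * \<bar>?z\<bar>)\<^sup>2 - (Y \<bullet> g) * ?z"
    unfolding \<beta> by (simp add: inner_diff_left power2_eq_square field_simps)
  moreover have "(Y \<bullet> g) * ?z \<le> (norm Y * \<bar>?z\<bar>) * norm g"
  proof -
    have "(Y \<bullet> g) * ?z \<le> \<bar>Y \<bullet> g\<bar> * \<bar>?z\<bar>"
      by (metis abs_mult abs_ge_self)
    also have "\<dots> \<le> norm Y * norm g * \<bar>?z\<bar>"
      by (intro mult_right_mono Cauchy_Schwarz_ineq2) simp
    finally show ?thesis
      by (simp add: mult_ac)
  qed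
  moreover have "0 < (norm g)\<^sup>2 - (norm Y * \<bar>?z\<bar>) * norm g + \<tau> * (norm Y * \<bar>?z\<bar>)\<^sup>2"
    using quadratic_form_pos[of "norm g" \<tau> "norm Y * \<bar>?z\<bar>"] g \<tau> by simp
  ultimately show ?thesis
    by (simp add: power2_norm_eq_inner)
qed

lemma csrh_direction_ascent:
  assumes run: "csrh_run f g c1 c2 \<tau> \<epsilon> x d \<alpha> k"
    and tangent: "\<And>y. norm y = 1 \<Longrightarrow> g y \<bullet> y = 0"
    and g: "g (x k) \<noteq> 0"
  shows "0 \<le> x k \<bullet> d k \<and> 0 < g (x k) \<bullet> d k"
proof (cases k)
  case 0
  then show ?thesis
    using run tangent[of "x 0"] g by (simp add: csrh_run_def inner_commute)
next
  case (Suc j)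
  define \<beta> where "\<beta> = csrh_beta \<tau> \<epsilon> (x k - x j) (g (x k) - g (x j)) (g (x k))"
  have d: "d k = g (x k) + \<beta> *\<^sub>R (x k - x j)"
    using run Suc by (simp add: csrh_run_def \<beta>_def)
  have unit: "norm (x k) = 1" "norm (x j) = 1"
    using csrh_run_norm[OF run] Suc by auto
  have "0 \<le> \<beta>"
    by (simp add: \<beta>_def csrh_beta_def)
  moreover have "x k \<bullet> x j \<le> 1"
    using norm_cauchy_schwarz[of "x k" "x j"] unit by simp
  ultimately have "0 \<le> \<beta> * (x k \<bullet> x k - x k \<bullet> x j)"
    using unit by (simp add: norm_eq_1)
  then have "0 \<le> x k \<bullet> d k"
    using tangent[OF unit(1)] by (simp add: d inner_add_right inner_diff_right inner_commute)
  moreover have "g (x k) \<bullet> d k = g (x k) \<bullet> g (x k) + \<beta> * ((x k - x j) \<bullet> g (x k))"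
    by (simp add: d inner_add_right inner_commute)
  moreover have "1/4 < \<tau>"
    using run by (simp add: csrh_run_def)
  ultimately show ?thesis
    using csrh_beta_ascent[OF g] by (simp add: \<beta>_def)
qed

section \<open>Existence of Wolfe step sizes\<close>

lemma armijo_stationary_step:
  fixes \<phi> \<phi>' :: "real \<Rightarrow> real"
  assumes deriv: "\<And>a. (\<phi> has_real_derivative \<phi>' a) (at a)"
    and bounded: "\<And>a. 0 \<le> a \<Longrightarrow> \<phi> a \<le> B"
    and slope: "0 < \<phi>' 0" and c: "0 < c" "c < 1"
  shows "\<exists>a>0. \<phi> 0 + c * a * \<phi>' 0 \<le> \<phi> a \<and> \<phi>' a = c * \<phi>' 0"
proof -
  \<comment> \<open>\<psi> is positive just right of 0 and negative at A, so it has an interior maximiser on [0, A]\<close>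
  define \<psi> where "\<psi> a = \<phi> a - \<phi> 0 - c * a * \<phi>' 0" for a
  have d\<psi>: "(\<psi> has_real_derivative \<phi>' a - c * \<phi>' 0) (at a)" for a
    unfolding \<psi>_def[abs_def] by (rule derivative_eq_intros deriv refl | simp)+
  have cs: "0 < c * \<phi>' 0"
    using c slope by simp
  define A where "A = (B - \<phi> 0) / (c * \<phi>' 0) + 1"
  have A: "1 \<le> A"
    using bounded[of 0] cs by (simp add: A_def)
  have "c * A * \<phi>' 0 = (c * \<phi>' 0) * ((B - \<phi> 0) / (c * \<phi>' 0)) + c * \<phi>' 0"
    by (simp add: A_def algebra_simps)
  also have "\<dots> = (B - \<phi> 0) + c * \<phi>' 0"
    using c slope by simp
  finally have "c * A * \<phi>' 0 = (B - \<phi> 0) + c * \<phi>' 0" .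
  then have \<psi>A: "\<psi> A < 0"
    using bounded[of A] A cs by (simp add: \<psi>_def)
  obtain \<delta> where \<delta>: "0 < \<delta>" "\<And>h. 0 < h \<Longrightarrow> h < \<delta> \<Longrightarrow> \<psi> 0 < \<psi> (0 + h)"
    using DERIV_pos_inc_right[OF d\<psi>, of 0] slope c by auto
  have "continuous_on {0..A} \<psi>"
    using d\<psi> by (meson DERIV_isCont continuous_at_imp_continuous_on)
  then obtain a where a: "a \<in> {0..A}" and max: "\<And>z. z \<in> {0..A} \<Longrightarrow> \<psi> z \<le> \<psi> a"
    using continuous_attains_sup[of "{0..A}" \<psi>] A by auto
  define h where "h = min (\<delta>/2) (A/2)"
  have h: "0 < h" "h < \<delta>" "h \<in> {0..A}"
    using \<delta>(1) A by (auto simp: h_def)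
  have pos: "0 < \<psi> a"
    using \<delta>(2)[OF h(1,2)] max[OF h(3)] by (simp add: \<psi>_def)
  then have "0 < a" "a < A"
    using a \<psi>A by (auto simp: \<psi>_def order.order_iff_strict)
  then have "\<phi>' a - c * \<phi>' 0 = 0"
    using max by (intro DERIV_local_max[OF d\<psi>, of "min a (A - a)"]) (auto simp: abs_less_iff)
  then show ?thesis
    using pos \<open>0 < a\<close> by (auto simp: \<psi>_def)
qed

lemma wolfe_step_exists:
  fixes f :: "real^'n::finite \<Rightarrow> real" and g :: "real^'n \<Rightarrow> real^'n"
  assumes deriv: "\<And>y. norm y = 1 \<Longrightarrow> (f has_derivative (\<lambda>h. g y \<bullet> h)) (at y)"
    and tangent: "\<And>y. norm y = 1 \<Longrightarrow> g y \<bullet> y = 0"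
    and x: "norm x = 1" and ascent: "0 \<le> x \<bullet> d" "0 < g x \<bullet> d"
    and c: "0 < c1" "c1 < c2" "c1 < 1"
  shows "\<exists>a>0. wolfe f g c1 c2 x d a"
proof -
  define \<phi>' where "\<phi>' a = g (xnext x d a) \<bullet> xnext_velocity x d a" for a
  have \<phi>: "((\<lambda>a. f (xnext x d a)) has_real_derivative \<phi>' a) (at a)" for a
  proof -
    have "((\<lambda>a. f (xnext x d a)) has_derivative (\<lambda>t. g (xnext x d a) \<bullet> (t *\<^sub>R xnext_velocity x d a))) (at a)"
      using xnext_has_vector_derivative[OF x, of d a] deriv[OF norm_xnext[OF x]]
      unfolding has_vector_derivative_def by (rule has_derivative_compose)
    moreover have "(\<lambda>t. g (xnext x d a) \<bullet> (t *\<^sub>R xnext_velocity x d a)) = (*) (\<phi>' a)"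
      by (simp add: fun_eq_iff \<phi>'_def)
    ultimately show ?thesis
      by (simp only: has_field_derivative_def)
  qed
  have \<phi>'0: "\<phi>' 0 = g x \<bullet> d"
    using tangent[OF x] by (simp add: \<phi>'_def xnext_0 xnext_velocity_0 inner_diff_right)
  have "continuous_on (sphere 0 1) f"
    using deriv by (meson continuous_at_imp_continuous_on has_derivative_continuous mem_sphere_0)
  then have "bounded (f ` sphere 0 1)"
    by (intro compact_imp_bounded compact_continuous_image compact_sphere)
  then obtain B where "\<forall>y\<in>sphere 0 1. \<bar>f y\<bar> \<le> B"
    by (auto simp: bounded_real)
  then have B: "\<And>y. norm y = 1 \<Longrightarrow> f y \<le> B"
    by (metis abs_le_D1 mem_sphere_0)
  obtain a where a: "0 < a" "f x + c1 * a * (g x \<bullet> d) \<le> f (xnext x d a)" "\<phi>' a = c1 * (g x \<bullet> d)"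
    using armijo_stationary_step[of "\<lambda>a. f (xnext x d a)" \<phi>' B c1] \<phi> B[OF norm_xnext[OF x]]
      ascent(2) c by (auto simp: \<phi>'0 xnext_0)
  \<comment> \<open>the gradient at the new point is orthogonal to it, so only the velocity part of d counts\<close>
  have "g (xnext x d a) \<bullet> d = xnext_num x d a / 4 * \<phi>' a"
    using arg_cong[OF direction_eq_xnext_velocity[OF x, of d a], of "(\<bullet>) (g (xnext x d a))"]
      tangent[OF norm_xnext[OF x]]
    by (simp add: inner_add_right \<phi>'_def inner_commute)
  also have "\<dots> \<le> c1 * (g x \<bullet> d)"
    using mult_right_mono[of "xnext_num x d a / 4" 1 "\<phi>' a"] xnext_num_le[OF x _ ascent(1), of a]
      a(1,3) c ascent(2)
    by simp
  also have "\<dots> < c2 * (g x \<bullet> d)"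
    using c ascent(2) by simp
  finally show ?thesis
    using a by (auto simp: wolfe_def)
qed

theorem theorem3p5:
  fixes r p :: nat and E :: "'n::finite set set" and s :: "'n set \<Rightarrow> real"
    and c1 c2 \<tau> \<epsilon> :: real and x d :: "nat \<Rightarrow> real^'n" and \<alpha> :: "nat \<Rightarrow> real" and k :: nat
  assumes "r \<ge> 2" and "p \<ge> 2"
    and "uniform_weighted_hypergraph r E s"
    and "csrh_run (fobj r p E s) (gradf r p E s) c1 c2 \<tau> \<epsilon> x d \<alpha> k"
    and "gradf r p E s (x k) \<noteq> 0"
    and "0 < c1" and "c1 < c2" and "c2 < 1"
  shows "\<exists>a>0. fobj r p E s (xnext (x k) (d k) a)
                 \<ge> fobj r p E s (x k) + c1 * a * (gradf r p E s (x k) \<bullet> d k)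
            \<and> gradf r p E s (xnext (x k) (d k) a) \<bullet> d k \<le> c2 * (gradf r p E s (x k) \<bullet> d k)"
proof -
  obtain m where r: "r = Suc m"
    using assms(1) by (cases r) auto
  have deriv: "\<And>y. norm y = 1 \<Longrightarrow> (fobj r p E s has_derivative (\<lambda>h. gradf r p E s y \<bullet> h)) (at y)"
    using fobj_has_derivative[OF r assms(2)] by (metis norm_zero zero_neq_one)
  have tangent: "\<And>y. norm y = 1 \<Longrightarrow> gradf r p E s y \<bullet> y = 0"
    using gradf_inner_self[OF r] assms(2) by (metis norm_zero one_le_numeral order.trans zero_neq_one)
  have "norm (x k) = 1"
    using csrh_run_norm[OF assms(4)] by simp
  moreover have "0 \<le> x k \<bullet> d k \<and> 0 < gradf r p E s (x k) \<bullet> d k"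
    using csrh_direction_ascent[OF assms(4) tangent assms(5)] .
  ultimately have "\<exists>a>0. wolfe (fobj r p E s) (gradf r p E s) c1 c2 (x k) (d k) a"
    using wolfe_step_exists[OF deriv tangent] assms(6-8) by simp
  then show ?thesis
    by (simp add: wolfe_def)
qed

end
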